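(* Let $\mathcal{I}$ be an interval hypergraph on $[n]$ closed under intersection. Then $P_{\mathcal{I}}$ is a lattice, and for acyclic orientations $A,B$ of $\mathcal{I}$, \[ A\vee B=\mathrm{Or}_{\sigma_A\vee\sigma_B}\quad\text{and}\quad A\wedge B=\mathrm{Or}_{\tau_A\wedge\tau_B}, \] where the joins and meets on the right are taken in the weak order on permutations of $[n]$.
   Context: An interval hypergraph $\mathcal{I}$ on $[n]$ is a collection of intervals of $[n]$ containing all singletons; it is closed under intersection if $I,J\in\mathcal{I}$, $I\cap J\ne\varnothing$ imply $I\cap J\in\mathcal{I}$. An orientation is a map $O:\mathcal{I}\to[n]$ with $O(I)\in I$; it is acyclic if there are no $H_1,\dots,H_k$, $k\ge2$, with $O(H_{i+1})\in H_i\setminus\{O(H_i)\}$ for $i\in[k-1]$ and $O(H_1)\in H_k\setminus\{O(H_k)\}$. Orientations $O\ne O'$ are related by an increasing flip (from $O$ to $O'$) if there exist $1\le i<j\le n$ such that for all $H$: if $O(H)\ne O'(H)$ then $O(H)=i$, $O'(H)=j$; and if $\{i,j\}\subseteq H$ then $O(H)=i\iff O'(H)=j$. $P_{\mathcal{I}}$ is the transitive closure of the increasing flip relation on acyclic orientations. For a permutation $\pi$ of $[n]$, $\mathrm{Or}_\pi(I)=\pi(\min\{j:\pi(j)\in I\})$; for each acyclic orientation $A$ the fiber $\{\pi:\mathrm{Or}_\pi=A\}$ is an interval $[\sigma_A,\tau_A]$ of the weak order. *)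

theory Defs
  imports "HOL-Combinatorics.Permutations"
begin

definition interval_hypergraph :: "nat \<Rightarrow> nat set set \<Rightarrow> bool" where
  "interval_hypergraph n \<I> \<longleftrightarrow>
     (\<forall>H\<in>\<I>. \<exists>a b. 1 \<le> a \<and> a \<le> b \<and> b \<le> n \<and> H = {a..b}) \<and>
     (\<forall>i\<in>{1..n}. {i} \<in> \<I>)"

definition closed_under_intersection :: "nat set set \<Rightarrow> bool" where
  "closed_under_intersection \<I> \<longleftrightarrow>
     (\<forall>I\<in>\<I>. \<forall>J\<in>\<I>. I \<inter> J \<noteq> {} \<longrightarrow> I \<inter> J \<in> \<I>)"

text \<open>An orientation is a map Q with Q(H) \<in> H for H \<in> \<I>; to make equality of
  orientations extensional we fix the convention Q(H) = 0 outside \<I>.\<close>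
definition orientation :: "nat set set \<Rightarrow> (nat set \<Rightarrow> nat) \<Rightarrow> bool" where
  "orientation \<I> Q \<longleftrightarrow> (\<forall>H\<in>\<I>. Q H \<in> H) \<and> (\<forall>H. H \<notin> \<I> \<longrightarrow> Q H = 0)"

definition acyclic_orientation :: "nat set set \<Rightarrow> (nat set \<Rightarrow> nat) \<Rightarrow> bool" where
  "acyclic_orientation \<I> Q \<longleftrightarrow> orientation \<I> Q \<and>
     \<not> (\<exists>k (Hs :: nat \<Rightarrow> nat set). k \<ge> 2 \<and> (\<forall>i. 1 \<le> i \<and> i \<le> k \<longrightarrow> Hs i \<in> \<I>) \<and>
          (\<forall>i. 1 \<le> i \<and> i < k \<longrightarrow> Q (Hs (Suc i)) \<in> Hs i - {Q (Hs i)}) \<and>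
          Q (Hs 1) \<in> Hs k - {Q (Hs k)})"

definition increasing_flip :: "nat \<Rightarrow> nat set set \<Rightarrow> (nat set \<Rightarrow> nat) \<Rightarrow> (nat set \<Rightarrow> nat) \<Rightarrow> bool" where
  "increasing_flip n \<I> Q Q' \<longleftrightarrow> Q \<noteq> Q' \<and>
     (\<exists>i j. 1 \<le> i \<and> i < j \<and> j \<le> n \<and>
        (\<forall>H\<in>\<I>. (Q H \<noteq> Q' H \<longrightarrow> Q H = i \<and> Q' H = j) \<and>
                 ({i, j} \<subseteq> H \<longrightarrow> (Q H = i \<longleftrightarrow> Q' H = j))))"

definition P_le :: "nat \<Rightarrow> nat set set \<Rightarrow> (nat set \<Rightarrow> nat) \<Rightarrow> (nat set \<Rightarrow> nat) \<Rightarrow> bool" where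
  "P_le n \<I> = (\<lambda>Q Q'. acyclic_orientation \<I> Q \<and> acyclic_orientation \<I> Q' \<and> increasing_flip n \<I> Q Q')\<^sup>*\<^sup>*"

definition Or_perm :: "nat \<Rightarrow> nat set set \<Rightarrow> (nat \<Rightarrow> nat) \<Rightarrow> (nat set \<Rightarrow> nat)" where
  "Or_perm n \<I> \<pi> = (\<lambda>H. if H \<in> \<I> then \<pi> (Min {j \<in> {1..n}. \<pi> j \<in> H}) else 0)"

text \<open>Weak order on permutations of [n] (in one-line notation \<pi>(1)...\<pi>(n)):
  inclusion of the inversion sets (pairs of values a<b with b before a).\<close>
definition inversions :: "nat \<Rightarrow> (nat \<Rightarrow> nat) \<Rightarrow> (nat \<times> nat) set" where
  "inversions n \<pi> = {(a, b). 1 \<le> a \<and> a < b \<and> b \<le> n \<and> inv \<pi> b < inv \<pi> a}"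

definition weak_le :: "nat \<Rightarrow> (nat \<Rightarrow> nat) \<Rightarrow> (nat \<Rightarrow> nat) \<Rightarrow> bool" where
  "weak_le n \<pi> \<rho> \<longleftrightarrow> inversions n \<pi> \<subseteq> inversions n \<rho>"

definition is_lub_on :: "'a set \<Rightarrow> ('a \<Rightarrow> 'a \<Rightarrow> bool) \<Rightarrow> 'a \<Rightarrow> 'a \<Rightarrow> 'a \<Rightarrow> bool" where
  "is_lub_on S le z x y \<longleftrightarrow> z \<in> S \<and> le x z \<and> le y z \<and>
     (\<forall>w\<in>S. le x w \<and> le y w \<longrightarrow> le z w)"

definition is_glb_on :: "'a set \<Rightarrow> ('a \<Rightarrow> 'a \<Rightarrow> bool) \<Rightarrow> 'a \<Rightarrow> 'a \<Rightarrow> 'a \<Rightarrow> bool" where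
  "is_glb_on S le z x y \<longleftrightarrow> z \<in> S \<and> le z x \<and> le z y \<and>
     (\<forall>w\<in>S. le w x \<and> le w y \<longrightarrow> le w z)"

definition perms :: "nat \<Rightarrow> (nat \<Rightarrow> nat) set" where
  "perms n = {\<pi>. \<pi> permutes {1..n}}"

definition fiber :: "nat \<Rightarrow> nat set set \<Rightarrow> (nat set \<Rightarrow> nat) \<Rightarrow> (nat \<Rightarrow> nat) set" where
  "fiber n \<I> A = {\<pi> \<in> perms n. Or_perm n \<I> \<pi> = A}"

definition sigma_of :: "nat \<Rightarrow> nat set set \<Rightarrow> (nat set \<Rightarrow> nat) \<Rightarrow> (nat \<Rightarrow> nat)" where
  "sigma_of n \<I> A = (THE \<sigma>. \<sigma> \<in> fiber n \<I> A \<and> (\<forall>\<pi>\<in>fiber n \<I> A. weak_le n \<sigma> \<pi>))"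

definition tau_of :: "nat \<Rightarrow> nat set set \<Rightarrow> (nat set \<Rightarrow> nat) \<Rightarrow> (nat \<Rightarrow> nat)" where
  "tau_of n \<I> A = (THE \<tau>. \<tau> \<in> fiber n \<I> A \<and> (\<forall>\<pi>\<in>fiber n \<I> A. weak_le n \<pi> \<tau>))"

end

theory Submission
  imports Defs
begin

text \<open>
  Or_\<pi> depends only on the inversion set of \<pi>: Or_\<pi> = A iff \<pi> has every inversion forced
  by A (a < b in an edge H with A H = b) and none of the non-inversions forced by A. For
  acyclic A these two relations have disjoint transitive closures, so the fibre of A is the
  weak-order interval from \<sigma>_A, whose inversion set is the closure of the forced inversions,
  to \<tau>_A, whose set of non-inversions is the closure of the forced non-inversions.
  The map \<pi> \<mapsto> Or_\<pi> is order preserving, because an adjacent transposition changes Or_\<pi> by an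
  increasing flip or not at all, and closure under intersection gives \<sigma>_A \<le> \<tau>_W whenever
  A \<le> W in P_\<I>. Hence Or of \<sigma>_A \<or> \<sigma>_B lies above A and B and below every common upper
  bound W, since \<sigma>_A \<or> \<sigma>_B \<le> \<tau>_W; meets are dual. Antisymmetry of P_\<I> holds because flips
  only increase the values of an orientation.
\<close>

section \<open>Inversion sets and the weak order\<close>

definition pairs :: "nat \<Rightarrow> (nat \<times> nat) set" where
  "pairs n = {(a, b). 1 \<le> a \<and> a < b \<and> b \<le> n}"

definition cotrans :: "(nat \<times> nat) set \<Rightarrow> bool" where
  "cotrans T \<longleftrightarrow> (\<forall>a b c. (a, c) \<in> T \<and> a < b \<and> b < c \<longrightarrow> (a, b) \<in> T \<or> (b, c) \<in> T)"

definition inversion_set :: "nat \<Rightarrow> (nat \<times> nat) set \<Rightarrow> bool" where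
  "inversion_set n T \<longleftrightarrow> T \<subseteq> pairs n \<and> trans T \<and> cotrans T"

lemma trancl_subset_trans: "r \<subseteq> s \<Longrightarrow> trans s \<Longrightarrow> r\<^sup>+ \<subseteq> s"
  using trancl_mono_subset trancl_id by metis

lemma trans_pairs: "trans (pairs n)"
  unfolding pairs_def trans_def by auto

lemma trans_less: "trans {(a, b :: nat). a < b}"
  unfolding trans_def by auto

lemma finite_pairs: "finite (pairs n)"
  by (rule finite_subset[of _ "{1..n} \<times> {1..n}"]) (auto simp: pairs_def)

lemma cotrans_trancl:
  assumes R: "R \<subseteq> {(a, b). (a::nat) < b}" and C: "cotrans R"
  shows "cotrans (R\<^sup>+)"
  unfolding cotrans_def
proof (intro allI impI)
  have R_less: "(x, y) \<in> R\<^sup>+ \<Longrightarrow> x < y" for x y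
    using trancl_subset_trans[OF R trans_less] by blast
  fix a b c assume abc: "(a, c) \<in> R\<^sup>+ \<and> a < b \<and> b < c"
  have "(a, c) \<in> R\<^sup>+ \<Longrightarrow> \<forall>b. a < b \<and> b < c \<longrightarrow> (a, b) \<in> R\<^sup>+ \<or> (b, c) \<in> R\<^sup>+"
  proof (induction rule: trancl_induct)
    case (base y)
    then show ?case using C unfolding cotrans_def by blast
  next
    case (step y z)
    show ?case
    proof (intro allI impI)
      fix b assume b: "a < b \<and> b < z"
      consider "b < y" | "b = y" | "y < b" by linarith
      then show "(a, b) \<in> R\<^sup>+ \<or> (b, z) \<in> R\<^sup>+"
      proof cases
        case 1
        then show ?thesis using step.IH b step.hyps(2) R_less[OF step.hyps(1)]
          by (meson trancl.simps)
      next
        case 2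
        then show ?thesis using step.hyps(1) by blast
      next
        case 3
        then have "(y, b) \<in> R \<or> (b, z) \<in> R" using C step.hyps(2) b unfolding cotrans_def by blast
        then show ?thesis using step.hyps(1) by auto
      qed
    qed
  qed
  then show "(a, b) \<in> R\<^sup>+ \<or> (b, c) \<in> R\<^sup>+" using abc by blast
qed

lemma inversion_set_trancl:
  assumes "R \<subseteq> pairs n" "cotrans R"
  shows "inversion_set n (R\<^sup>+)"
proof -
  have "R \<subseteq> {(a, b). a < b}" using assms(1) unfolding pairs_def by auto
  then show ?thesis
    unfolding inversion_set_def
    using trancl_subset_trans[OF assms(1) trans_pairs] cotrans_trancl assms(2) by auto
qed

lemma inversion_set_join:
  assumes "inversion_set n T1" "inversion_set n T2"
  shows "inversion_set n ((T1 \<union> T2)\<^sup>+)"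
proof (rule inversion_set_trancl)
  show "T1 \<union> T2 \<subseteq> pairs n" using assms unfolding inversion_set_def by auto
  show "cotrans (T1 \<union> T2)" using assms unfolding inversion_set_def cotrans_def by blast
qed

lemma inversion_set_compl:
  assumes "inversion_set n T"
  shows "inversion_set n (pairs n - T)"
proof -
  have "trans T" "cotrans T" using assms unfolding inversion_set_def by auto
  then have "trans (pairs n - T)" "cotrans (pairs n - T)"
    unfolding trans_def cotrans_def pairs_def by (auto 0 4 dest: order.strict_trans)
  then show ?thesis unfolding inversion_set_def by auto
qed

lemma inversion_set_inversions: "inversion_set n (inversions n \<pi>)"
  unfolding inversion_set_def cotrans_def trans_def inversions_def pairs_def
  by (auto; meson not_less_iff_gr_or_eq order.strict_trans leI le_less_trans)

definition precedes :: "(nat \<times> nat) set \<Rightarrow> nat \<Rightarrow> nat \<Rightarrow> bool" where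
  "precedes T x y \<longleftrightarrow> (x < y \<and> (x, y) \<notin> T) \<or> (y < x \<and> (y, x) \<in> T)"

definition rank :: "nat \<Rightarrow> (nat \<times> nat) set \<Rightarrow> nat \<Rightarrow> nat" where
  "rank n T x = Suc (card {y \<in> {1..n}. precedes T y x})"

lemma precedes_irrefl: "\<not> precedes T x x"
  unfolding precedes_def by auto

lemma precedes_total: "x \<noteq> y \<Longrightarrow> precedes T x y \<or> precedes T y x"
  unfolding precedes_def by auto

lemma precedes_trans:
  assumes "inversion_set n T" "precedes T x y" "precedes T y z"
  shows "precedes T x z"
proof -
  have t: "\<And>a b c. (a, b) \<in> T \<Longrightarrow> (b, c) \<in> T \<Longrightarrow> (a, c) \<in> T"
    and c: "\<And>a b c. (a, c) \<in> T \<Longrightarrow> a < b \<Longrightarrow> b < c \<Longrightarrow> (a, b) \<in> T \<or> (b, c) \<in> T"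
    using assms(1) unfolding inversion_set_def trans_def cotrans_def by blast+
  consider "x < y" "y < z" | "x < z" "z < y" | "y < x" "x < z" | "y < z" "z < x"
    | "z < x" "x < y" | "z < y" "y < x" | "x = z"
    using assms(2,3) unfolding precedes_def by linarith
  then show ?thesis
    using assms(2,3) unfolding precedes_def by cases (auto dest: c t)
qed

lemma perms_permutes: "\<pi> \<in> perms n \<Longrightarrow> \<pi> permutes {1..n}"
  unfolding perms_def by auto

lemma perms_inv_inject: "\<pi> \<in> perms n \<Longrightarrow> inv \<pi> x = inv \<pi> y \<Longrightarrow> x = y"
  by (metis perms_permutes permutes_inverses(1))

lemma perms_in_range:
  assumes "\<pi> \<in> perms n" "x \<in> {1..n}"
  shows "\<pi> x \<in> {1..n}" "inv \<pi> x \<in> {1..n}"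
proof -
  have "\<pi> permutes {1..n}" using assms(1) by (rule perms_permutes)
  then show "\<pi> x \<in> {1..n}" "inv \<pi> x \<in> {1..n}"
    using assms(2) permutes_in_image[of _ "{1..n}"] permutes_inv[of _ "{1..n}"] by auto
qed

lemma inv_less_iff_precedes:
  assumes "\<pi> \<in> perms n" "x \<in> {1..n}" "y \<in> {1..n}"
  shows "inv \<pi> x < inv \<pi> y \<longleftrightarrow> precedes (inversions n \<pi>) x y"
proof (cases "x = y")
  case False
  then have "inv \<pi> x \<noteq> inv \<pi> y" using perms_inv_inject[OF assms(1)] by blast
  then show ?thesis using False assms unfolding precedes_def inversions_def by auto
qed (simp add: precedes_irrefl)

lemma permutes_eq_Suc_card_less:
  assumes f: "f permutes {1..n}" and x: "x \<in> {1..n}"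
  shows "f x = Suc (card {y \<in> {1..n}. f y < f x})"
proof -
  have fx: "f x \<in> {1..n}" using permutes_in_image[OF f] x by blast
  have "f ` {y \<in> {1..n}. f y < f x} = {1..<f x}"
  proof (intro equalityI subsetI)
    fix j assume j: "j \<in> {1..<f x}"
    then have "inv f j \<in> {1..n}"
      using fx permutes_in_image[OF permutes_inv[OF f], of j] by simp
    moreover have "f (inv f j) = j" using permutes_inverses(1)[OF f] .
    ultimately show "j \<in> f ` {y \<in> {1..n}. f y < f x}"
      using j by (intro image_eqI[of _ _ "inv f j"]) auto
  qed (use permutes_in_image[OF f] in force)
  moreover have "card (f ` {y \<in> {1..n}. f y < f x}) = card {y \<in> {1..n}. f y < f x}"
    using permutes_inj_on[OF f] by (rule card_image)
  ultimately have "card {y \<in> {1..n}. f y < f x} = f x - 1" by simp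
  then show ?thesis using fx by simp
qed

lemma inv_eq_rank:
  assumes "\<pi> \<in> perms n" "x \<in> {1..n}"
  shows "inv \<pi> x = rank n (inversions n \<pi>) x"
proof -
  have "inv \<pi> x = Suc (card {y \<in> {1..n}. inv \<pi> y < inv \<pi> x})"
    using permutes_eq_Suc_card_less[OF permutes_inv[OF perms_permutes[OF assms(1)]] assms(2)] .
  also have "{y \<in> {1..n}. inv \<pi> y < inv \<pi> x} = {y \<in> {1..n}. precedes (inversions n \<pi>) y x}"
    using inv_less_iff_precedes[OF assms(1) _ assms(2)] by auto
  finally show ?thesis unfolding rank_def .
qed

lemma inversions_inject:
  assumes "\<pi> \<in> perms n" "\<rho> \<in> perms n" "inversions n \<pi> = inversions n \<rho>"
  shows "\<pi> = \<rho>"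
proof -
  have p: "\<pi> permutes {1..n}" and r: "\<rho> permutes {1..n}" using assms perms_permutes by auto
  have "inv \<pi> = inv \<rho>"
  proof
    fix x show "inv \<pi> x = inv \<rho> x"
    proof (cases "x \<in> {1..n}")
      case True then show ?thesis using inv_eq_rank assms by metis
    next
      case False then show ?thesis
        using permutes_inv[OF p] permutes_inv[OF r] unfolding permutes_def by auto
    qed
  qed
  then show ?thesis using permutes_inv_inv[OF p] permutes_inv_inv[OF r] by metis
qed

lemma weak_le_antisym:
  "\<pi> \<in> perms n \<Longrightarrow> \<rho> \<in> perms n \<Longrightarrow> weak_le n \<pi> \<rho> \<Longrightarrow> weak_le n \<rho> \<pi> \<Longrightarrow> \<pi> = \<rho>"
  using inversions_inject unfolding weak_le_def by blast

lemma rank_less: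
  assumes "inversion_set n T" "precedes T x y" "x \<in> {1..n}"
  shows "rank n T x < rank n T y"
proof -
  have "{z \<in> {1..n}. precedes T z x} \<subset> {z \<in> {1..n}. precedes T z y}"
    using precedes_trans[OF assms(1) _ assms(2)] assms(2,3) precedes_irrefl by blast
  then show ?thesis unfolding rank_def by (simp add: psubset_card_mono)
qed

lemma rank_in_range:
  assumes "x \<in> {1..n}"
  shows "rank n T x \<in> {1..n}"
proof -
  have "card {z \<in> {1..n}. precedes T z x} \<le> card ({1..n} - {x})"
    using precedes_irrefl by (intro card_mono) auto
  then show ?thesis unfolding rank_def using assms by auto
qed

text \<open>The permutation with inversion set T puts x at position rank n T x.\<close>
lemma inversion_set_imp_inversions:
  assumes T: "inversion_set n T"
  obtains \<pi> where "\<pi> \<in> perms n" "inversions n \<pi> = T"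
proof -
  define \<rho> where "\<rho> x = (if x \<in> {1..n} then rank n T x else x)" for x
  have \<rho>_less: "\<rho> x < \<rho> y" if "x \<in> {1..n}" "y \<in> {1..n}" "precedes T x y" for x y
    using rank_less[OF T] that unfolding \<rho>_def by auto
  have "inj_on \<rho> {1..n}"
    by (rule inj_onI) (metis \<rho>_less precedes_total less_irrefl)
  moreover have "\<rho> ` {1..n} \<subseteq> {1..n}" using rank_in_range unfolding \<rho>_def by auto
  ultimately have "bij_betw \<rho> {1..n} {1..n}"
    by (simp add: bij_betw_def endo_inj_surj)
  then have \<rho>: "\<rho> permutes {1..n}" by (rule bij_imp_permutes) (auto simp: \<rho>_def)
  then have \<pi>: "inv \<rho> \<in> perms n" and inv_\<pi>: "inv (inv \<rho>) = \<rho>"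
    using permutes_inv permutes_inv_inv unfolding perms_def by auto
  have "inversions n (inv \<rho>) = T"
  proof (intro equalityI subrelI)
    fix a b assume "(a, b) \<in> inversions n (inv \<rho>)"
    then have "\<not> precedes T a b" "1 \<le> a" "a < b" "b \<le> n"
      using \<rho>_less[of a b] unfolding inversions_def inv_\<pi> by auto
    then show "(a, b) \<in> T" unfolding precedes_def by auto
  next
    fix a b assume ab: "(a, b) \<in> T"
    then have "1 \<le> a" "a < b" "b \<le> n" using T unfolding inversion_set_def pairs_def by auto
    moreover have "precedes T b a" using ab \<open>a < b\<close> unfolding precedes_def by auto
    ultimately show "(a, b) \<in> inversions n (inv \<rho>)"
      using \<rho>_less[of b a] unfolding inversions_def inv_\<pi> by auto
  qed
  with \<pi> show ?thesis by (rule that)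
qed

lemma trans_inversions: "trans (inversions n \<pi>)"
  using inversion_set_inversions unfolding inversion_set_def by blast

lemma trans_noninversions: "trans (pairs n - inversions n \<pi>)"
  using inversion_set_compl[OF inversion_set_inversions] unfolding inversion_set_def by blast

lemma inversions_subset_pairs: "inversions n \<pi> \<subseteq> pairs n"
  unfolding inversions_def pairs_def by auto

lemma weak_le_lub_exists:
  assumes "\<pi>1 \<in> perms n" "\<pi>2 \<in> perms n"
  shows "\<exists>\<pi>. is_lub_on (perms n) (weak_le n) \<pi> \<pi>1 \<pi>2"
proof -
  let ?I = "inversions n"
  obtain \<pi> where \<pi>: "\<pi> \<in> perms n" "?I \<pi> = (?I \<pi>1 \<union> ?I \<pi>2)\<^sup>+"
    using inversion_set_imp_inversions inversion_set_join inversion_set_inversions assms by metis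
  have "(?I \<pi>1 \<union> ?I \<pi>2)\<^sup>+ \<subseteq> ?I \<rho>"
    if "\<rho> \<in> perms n" "?I \<pi>1 \<subseteq> ?I \<rho>" "?I \<pi>2 \<subseteq> ?I \<rho>" for \<rho>
    using that by (intro trancl_subset_trans trans_inversions) auto
  with \<pi> have "is_lub_on (perms n) (weak_le n) \<pi> \<pi>1 \<pi>2"
    unfolding is_lub_on_def weak_le_def by auto
  then show ?thesis by blast
qed

lemma weak_le_glb_exists:
  assumes "\<pi>1 \<in> perms n" "\<pi>2 \<in> perms n"
  shows "\<exists>\<pi>. is_glb_on (perms n) (weak_le n) \<pi> \<pi>1 \<pi>2"
proof -
  let ?I = "inversions n" and ?C = "\<lambda>\<pi>. pairs n - inversions n \<pi>"
  obtain \<pi> where \<pi>: "\<pi> \<in> perms n" "?I \<pi> = pairs n - (?C \<pi>1 \<union> ?C \<pi>2)\<^sup>+"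
    using inversion_set_imp_inversions inversion_set_compl inversion_set_join
      inversion_set_inversions assms by metis
  have "?I \<pi> \<subseteq> ?I \<pi>1" "?I \<pi> \<subseteq> ?I \<pi>2"
    unfolding \<pi>(2) using inversions_subset_pairs[of n] by (blast intro: r_into_trancl')+
  moreover have "?I \<rho> \<subseteq> ?I \<pi>"
    if "\<rho> \<in> perms n" "?I \<rho> \<subseteq> ?I \<pi>1" "?I \<rho> \<subseteq> ?I \<pi>2" for \<rho>
  proof -
    have "(?C \<pi>1 \<union> ?C \<pi>2)\<^sup>+ \<subseteq> ?C \<rho>"
      using that by (intro trancl_subset_trans trans_noninversions) auto
    then show ?thesis unfolding \<pi>(2) using inversions_subset_pairs by blast
  qed
  ultimately have "is_glb_on (perms n) (weak_le n) \<pi> \<pi>1 \<pi>2"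
    using \<pi>(1) unfolding is_glb_on_def weak_le_def by blast
  then show ?thesis by blast
qed

section \<open>Acyclic orientations and forced pairs\<close>

lemma interval_hypergraph_edgeD:
  assumes "interval_hypergraph n \<I>" "H \<in> \<I>"
  shows "H \<subseteq> {1..n}" "finite H" "H \<noteq> {}"
    and "u \<in> H \<Longrightarrow> v \<in> H \<Longrightarrow> u \<le> z \<Longrightarrow> z \<le> v \<Longrightarrow> z \<in> H"
  using assms unfolding interval_hypergraph_def by (auto; fastforce)+

definition orientation_digraph :: "nat set set \<Rightarrow> (nat set \<Rightarrow> nat) \<Rightarrow> (nat \<times> nat) set" where
  "orientation_digraph \<I> Q = {(Q H, y) | H y. H \<in> \<I> \<and> y \<in> H \<and> y \<noteq> Q H}"

lemma orientation_digraphI: "H \<in> \<I> \<Longrightarrow> y \<in> H \<Longrightarrow> y \<noteq> Q H \<Longrightarrow> (Q H, y) \<in> orientation_digraph \<I> Q"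
  unfolding orientation_digraph_def by blast

lemma orientation_digraphE:
  assumes "(x, y) \<in> orientation_digraph \<I> Q"
  obtains H where "H \<in> \<I>" "x = Q H" "y \<in> H" "y \<noteq> Q H"
  using assms unfolding orientation_digraph_def by blast

definition orientation_cycle :: "nat set set \<Rightarrow> (nat set \<Rightarrow> nat) \<Rightarrow> nat \<Rightarrow> (nat \<Rightarrow> nat set) \<Rightarrow> bool"
  where "orientation_cycle \<I> Q k Hs \<longleftrightarrow> 2 \<le> k \<and> (\<forall>i. 1 \<le> i \<and> i \<le> k \<longrightarrow> Hs i \<in> \<I>) \<and>
     (\<forall>i. 1 \<le> i \<and> i < k \<longrightarrow> Q (Hs (Suc i)) \<in> Hs i - {Q (Hs i)}) \<and> Q (Hs 1) \<in> Hs k - {Q (Hs k)}"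

lemma orientation_cycle_imp_trancl:
  assumes cyc: "orientation_cycle \<I> Q k Hs"
  shows "(Q (Hs 1), Q (Hs 1)) \<in> (orientation_digraph \<I> Q)\<^sup>+"
proof -
  define f where "f i = Q (Hs (if i < k then Suc i else 1))" for i
  have "(f i, f (Suc i)) \<in> orientation_digraph \<I> Q" if "i < k" for i
  proof -
    have "Suc i < k \<or> Suc i = k" using that by linarith
    then show ?thesis
      using cyc that unfolding orientation_cycle_def orientation_digraph_def f_def
      by (auto intro!: exI[of _ "Hs (Suc i)"])
  qed
  then have "(f 0, f k) \<in> orientation_digraph \<I> Q ^^ k" by (auto simp: relpow_fun_conv)
  moreover have "f 0 = Q (Hs 1)" "f k = Q (Hs 1)" "0 < k"
    using cyc unfolding f_def orientation_cycle_def by auto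
  ultimately show ?thesis using trancl_power by metis
qed

lemma trancl_imp_orientation_cycle:
  assumes "(x, x) \<in> (orientation_digraph \<I> Q)\<^sup>+"
  shows "\<exists>k Hs. orientation_cycle \<I> Q k Hs"
proof -
  obtain k f where k: "0 < k" "f 0 = x" "f k = x" "\<forall>i<k. (f i, f (Suc i)) \<in> orientation_digraph \<I> Q"
    using assms trancl_power relpow_fun_conv by metis
  define G where "G i = (SOME H. H \<in> \<I> \<and> Q H = f i \<and> f (Suc i) \<in> H - {Q H})" for i
  have G: "G i \<in> \<I> \<and> Q (G i) = f i \<and> f (Suc i) \<in> G i - {Q (G i)}" if "i < k" for i
    unfolding G_def by (rule someI_ex) (use k(4) that in \<open>fastforce simp: orientation_digraph_def\<close>)
  have "k \<noteq> 1" using G[of 0] k by auto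
  moreover have "Q (G i) \<in> G (i - 1) - {Q (G (i - 1))}" if "1 \<le> i" "i < k" for i
    using G[of i] G[of "i - 1"] that by (cases i) auto
  moreover have "Q (G 0) \<in> G (k - 1) - {Q (G (k - 1))}"
    using G[of 0] G[of "k - 1"] k by simp
  moreover have "G (i - 1) \<in> \<I>" if "1 \<le> i" "i \<le> k" for i
    using G[of "i - 1"] that by simp
  ultimately have "orientation_cycle \<I> Q k (\<lambda>i. G (i - 1))"
    unfolding orientation_cycle_def using k(1) by simp
  then show ?thesis by (intro exI)
qed

lemma acyclic_orientation_iff:
  "acyclic_orientation \<I> Q \<longleftrightarrow> orientation \<I> Q \<and> acyclic (orientation_digraph \<I> Q)"
proof -
  have "acyclic_orientation \<I> Q \<longleftrightarrow> orientation \<I> Q \<and> \<not> (\<exists>k Hs. orientation_cycle \<I> Q k Hs)"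
    unfolding acyclic_orientation_def orientation_cycle_def ..
  then show ?thesis
    unfolding acyclic_def using orientation_cycle_imp_trancl trancl_imp_orientation_cycle by metis
qed

lemma acyclic_orientation_restrict:
  assumes Q: "acyclic_orientation \<I> Q" and K: "K \<in> \<I>" "G \<in> \<I>" "K \<subseteq> G" "Q G \<in> K"
  shows "Q K = Q G"
proof (rule ccontr)
  assume ne: "Q K \<noteq> Q G"
  let ?E = "orientation_digraph \<I> Q"
  have "Q K \<in> K" using Q K(1) unfolding acyclic_orientation_def orientation_def by blast
  then have "(Q G, Q K) \<in> ?E" "(Q K, Q G) \<in> ?E"
    using K ne by (auto intro: orientation_digraphI)
  then have "(Q G, Q G) \<in> ?E\<^sup>+" by (blast intro: trancl_into_trancl)
  then show False using Q unfolding acyclic_orientation_iff acyclic_def by blast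
qed

text \<open>Pairs a < b whose relative order is forced by Q in every permutation inducing Q:
  b must precede a, respectively a must precede b.\<close>
definition forced_inversions :: "nat set set \<Rightarrow> (nat set \<Rightarrow> nat) \<Rightarrow> (nat \<times> nat) set" where
  "forced_inversions \<I> Q = {(a, b). a < b \<and> (b, a) \<in> orientation_digraph \<I> Q}"

definition forced_noninversions :: "nat set set \<Rightarrow> (nat set \<Rightarrow> nat) \<Rightarrow> (nat \<times> nat) set" where
  "forced_noninversions \<I> Q = {(a, b). a < b \<and> (a, b) \<in> orientation_digraph \<I> Q}"

lemma trancl_forced_disjoint:
  assumes "acyclic_orientation \<I> Q"
  shows "(forced_inversions \<I> Q)\<^sup>+ \<inter> (forced_noninversions \<I> Q)\<^sup>+ = {}"
proof -
  let ?E = "orientation_digraph \<I> Q"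
  have "forced_inversions \<I> Q \<subseteq> ?E\<inverse>" "forced_noninversions \<I> Q \<subseteq> ?E"
    unfolding forced_inversions_def forced_noninversions_def by auto
  then have "(forced_inversions \<I> Q)\<^sup>+ \<subseteq> (?E\<^sup>+)\<inverse>" "(forced_noninversions \<I> Q)\<^sup>+ \<subseteq> ?E\<^sup>+"
    using trancl_mono_subset trancl_converse by metis+
  moreover have "(a, b) \<in> ?E\<^sup>+ \<Longrightarrow> (b, a) \<in> ?E\<^sup>+ \<Longrightarrow> False" for a b
    using assms trancl_trans unfolding acyclic_orientation_iff acyclic_def by metis
  ultimately show ?thesis by blast
qed

lemma orientation_digraph_subset:
  assumes "interval_hypergraph n \<I>" "orientation \<I> Q"
  shows "orientation_digraph \<I> Q \<subseteq> {1..n} \<times> {1..n}"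
proof (rule subrelI)
  fix x y assume "(x, y) \<in> orientation_digraph \<I> Q"
  then obtain H where "H \<in> \<I>" "x = Q H" "y \<in> H" by (rule orientation_digraphE)
  then show "(x, y) \<in> {1..n} \<times> {1..n}"
    using interval_hypergraph_edgeD(1)[OF assms(1)] assms(2) unfolding orientation_def by blast
qed

lemma forced_subset_pairs:
  assumes "interval_hypergraph n \<I>" "orientation \<I> Q"
  shows "forced_inversions \<I> Q \<subseteq> pairs n" "forced_noninversions \<I> Q \<subseteq> pairs n"
  using orientation_digraph_subset[OF assms]
  unfolding forced_inversions_def forced_noninversions_def pairs_def by fastforce+

lemma cotrans_forced_inversions:
  assumes IH: "interval_hypergraph n \<I>" and Q: "orientation \<I> Q"
  shows "cotrans (forced_inversions \<I> Q)"
  unfolding cotrans_def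
proof (intro allI impI)
  fix a b c assume "(a, c) \<in> forced_inversions \<I> Q \<and> a < b \<and> b < c"
  then have abc: "(c, a) \<in> orientation_digraph \<I> Q" "a < b" "b < c"
    unfolding forced_inversions_def by auto
  obtain H where H: "H \<in> \<I>" "c = Q H" "a \<in> H"
    using abc(1) by (rule orientation_digraphE)
  have "c \<in> H" using Q H(1,2) unfolding orientation_def by blast
  then have "b \<in> H" using interval_hypergraph_edgeD(4)[OF IH H(1,3)] abc(2,3) by simp
  then have "(c, b) \<in> orientation_digraph \<I> Q"
    using orientation_digraphI[OF H(1)] H(2) abc(3) by simp
  then show "(a, b) \<in> forced_inversions \<I> Q \<or> (b, c) \<in> forced_inversions \<I> Q"
    using abc unfolding forced_inversions_def by simp
qed

lemma cotrans_forced_noninversions: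
  assumes IH: "interval_hypergraph n \<I>" and Q: "orientation \<I> Q"
  shows "cotrans (forced_noninversions \<I> Q)"
  unfolding cotrans_def
proof (intro allI impI)
  fix a b c assume "(a, c) \<in> forced_noninversions \<I> Q \<and> a < b \<and> b < c"
  then have abc: "(a, c) \<in> orientation_digraph \<I> Q" "a < b" "b < c"
    unfolding forced_noninversions_def by auto
  obtain H where H: "H \<in> \<I>" "a = Q H" "c \<in> H"
    using abc(1) by (rule orientation_digraphE)
  have "a \<in> H" using Q H(1,2) unfolding orientation_def by blast
  then have "b \<in> H" using interval_hypergraph_edgeD(4)[OF IH H(1) _ H(3)] abc(2,3) by simp
  then have "(a, b) \<in> orientation_digraph \<I> Q"
    using orientation_digraphI[OF H(1)] H(2) abc(2) by simp
  then show "(a, b) \<in> forced_noninversions \<I> Q \<or> (b, c) \<in> forced_noninversions \<I> Q"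
    using abc unfolding forced_noninversions_def by simp
qed

lemma inversion_set_forced:
  assumes "interval_hypergraph n \<I>" "orientation \<I> Q"
  shows "inversion_set n ((forced_inversions \<I> Q)\<^sup>+)"
    and "inversion_set n ((forced_noninversions \<I> Q)\<^sup>+)"
  using inversion_set_trancl forced_subset_pairs[OF assms]
    cotrans_forced_inversions[OF assms] cotrans_forced_noninversions[OF assms] by auto

section \<open>Orientations induced by permutations\<close>

lemma Or_perm_eq_iff:
  assumes IH: "interval_hypergraph n \<I>" and H: "H \<in> \<I>" and \<pi>: "\<pi> \<in> perms n"
  shows "Or_perm n \<I> \<pi> H = x \<longleftrightarrow> x \<in> H \<and> (\<forall>y\<in>H. inv \<pi> x \<le> inv \<pi> y)"
proof -
  have p: "\<pi> permutes {1..n}" using \<pi> by (rule perms_permutes)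
  have sub: "H \<subseteq> {1..n}" "finite H" "H \<noteq> {}" using interval_hypergraph_edgeD[OF IH H] by auto
  have "{j \<in> {1..n}. \<pi> j \<in> H} = inv \<pi> ` H"
  proof (intro equalityI subsetI)
    fix j assume "j \<in> {j \<in> {1..n}. \<pi> j \<in> H}"
    then show "j \<in> inv \<pi> ` H"
      using permutes_inverses(2)[OF p, of j] by (metis (lifting) image_eqI mem_Collect_eq)
  next
    fix j assume "j \<in> inv \<pi> ` H"
    then obtain x where x: "x \<in> H" "j = inv \<pi> x" by blast
    then have "j \<in> {1..n}" using sub(1) perms_in_range(2)[OF \<pi>] by blast
    then show "j \<in> {j \<in> {1..n}. \<pi> j \<in> H}" using x permutes_inverses(1)[OF p, of x] by simp
  qed
  moreover have "Min (inv \<pi> ` H) \<in> inv \<pi> ` H" using sub by simp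
  then obtain m where m: "m \<in> H" "Min (inv \<pi> ` H) = inv \<pi> m" by auto
  ultimately have "Or_perm n \<I> \<pi> H = m"
    unfolding Or_perm_def using H permutes_inverses(1)[OF p, of m] by simp
  moreover have "\<forall>y\<in>H. inv \<pi> m \<le> inv \<pi> y" using m sub(2) by (metis Min_le finite_imageI image_eqI)
  moreover have "x = m" if "x \<in> H" "\<forall>y\<in>H. inv \<pi> x \<le> inv \<pi> y"
    using that m \<open>\<forall>y\<in>H. inv \<pi> m \<le> inv \<pi> y\<close> perms_inv_inject[OF \<pi>] by (meson order_antisym)
  ultimately show ?thesis using m(1) by blast
qed

lemma Or_perm_first:
  assumes "interval_hypergraph n \<I>" "H \<in> \<I>" "\<pi> \<in> perms n"
  shows "Or_perm n \<I> \<pi> H \<in> H" "y \<in> H \<Longrightarrow> inv \<pi> (Or_perm n \<I> \<pi> H) \<le> inv \<pi> y"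
  using Or_perm_eq_iff[OF assms, of "Or_perm n \<I> \<pi> H"] by auto

lemma Or_perm_eq_iff_digraph:
  assumes IH: "interval_hypergraph n \<I>" and A: "orientation \<I> A" and \<pi>: "\<pi> \<in> perms n"
  shows "Or_perm n \<I> \<pi> = A \<longleftrightarrow> (\<forall>(x, y) \<in> orientation_digraph \<I> A. inv \<pi> x < inv \<pi> y)"
proof -
  have AH: "A H \<in> H" if "H \<in> \<I>" for H using A that unfolding orientation_def by blast
  have "Or_perm n \<I> \<pi> = A \<longleftrightarrow> (\<forall>H\<in>\<I>. Or_perm n \<I> \<pi> H = A H)"
  proof
    assume "\<forall>H\<in>\<I>. Or_perm n \<I> \<pi> H = A H"
    moreover have "Or_perm n \<I> \<pi> H = A H" if "H \<notin> \<I>" for H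
      using A that unfolding orientation_def Or_perm_def by simp
    ultimately show "Or_perm n \<I> \<pi> = A" by (intro ext) (case_tac "x \<in> \<I>", simp_all)
  qed simp
  also have "\<dots> \<longleftrightarrow> (\<forall>H\<in>\<I>. \<forall>y\<in>H. inv \<pi> (A H) \<le> inv \<pi> y)"
    using Or_perm_eq_iff[OF IH _ \<pi>] AH by simp
  also have "\<dots> \<longleftrightarrow> (\<forall>(x, y) \<in> orientation_digraph \<I> A. inv \<pi> x < inv \<pi> y)"
  proof
    assume first: "\<forall>H\<in>\<I>. \<forall>y\<in>H. inv \<pi> (A H) \<le> inv \<pi> y"
    show "\<forall>(x, y) \<in> orientation_digraph \<I> A. inv \<pi> x < inv \<pi> y"
    proof (clarify elim!: orientation_digraphE)
      fix H y assume "H \<in> \<I>" "y \<in> H" "y \<noteq> A H"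
      then have "inv \<pi> (A H) \<le> inv \<pi> y" "inv \<pi> (A H) \<noteq> inv \<pi> y"
        using first perms_inv_inject[OF \<pi>] by auto
      then show "inv \<pi> (A H) < inv \<pi> y" by simp
    qed
  next
    assume edges: "\<forall>(x, y) \<in> orientation_digraph \<I> A. inv \<pi> x < inv \<pi> y"
    show "\<forall>H\<in>\<I>. \<forall>y\<in>H. inv \<pi> (A H) \<le> inv \<pi> y"
    proof (intro ballI)
      fix H y assume "H \<in> \<I>" "y \<in> H"
      then show "inv \<pi> (A H) \<le> inv \<pi> y"
        using edges orientation_digraphI[of H \<I> y A] by (cases "y = A H") auto
    qed
  qed
  finally show ?thesis .
qed

lemma acyclic_orientation_Or_perm:
  assumes IH: "interval_hypergraph n \<I>" and \<pi>: "\<pi> \<in> perms n"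
  shows "acyclic_orientation \<I> (Or_perm n \<I> \<pi>)"
proof -
  have ori: "orientation \<I> (Or_perm n \<I> \<pi>)"
    unfolding orientation_def using Or_perm_first(1)[OF IH _ \<pi>] by (simp add: Or_perm_def)
  then have "orientation_digraph \<I> (Or_perm n \<I> \<pi>) \<subseteq> inv_image less_than (inv \<pi>)"
    using Or_perm_eq_iff_digraph[OF IH ori \<pi>] by auto
  then have "acyclic (orientation_digraph \<I> (Or_perm n \<I> \<pi>))"
    by (rule acyclic_subset[OF wf_acyclic[OF wf_inv_image[OF wf_less_than]]])
  with ori show ?thesis unfolding acyclic_orientation_iff by blast
qed

lemma precedes_on_digraph_iff:
  "(\<forall>(x, y) \<in> orientation_digraph \<I> Q. precedes T x y) \<longleftrightarrow>
     forced_inversions \<I> Q \<subseteq> T \<and> forced_noninversions \<I> Q \<inter> T = {}"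
proof
  assume "\<forall>(x, y) \<in> orientation_digraph \<I> Q. precedes T x y"
  then show "forced_inversions \<I> Q \<subseteq> T \<and> forced_noninversions \<I> Q \<inter> T = {}"
    unfolding forced_inversions_def forced_noninversions_def precedes_def by auto
next
  assume forced: "forced_inversions \<I> Q \<subseteq> T \<and> forced_noninversions \<I> Q \<inter> T = {}"
  show "\<forall>(x, y) \<in> orientation_digraph \<I> Q. precedes T x y"
  proof clarify
    fix x y assume xy: "(x, y) \<in> orientation_digraph \<I> Q"
    then have "x < y \<or> y < x" by (auto elim: orientation_digraphE)
    then show "precedes T x y"
      using xy forced unfolding forced_inversions_def forced_noninversions_def precedes_def by auto
  qed
qed

lemma Or_perm_eq_iff_forced:
  assumes IH: "interval_hypergraph n \<I>" and A: "orientation \<I> A" and \<pi>: "\<pi> \<in> perms n"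
  shows "Or_perm n \<I> \<pi> = A \<longleftrightarrow>
    forced_inversions \<I> A \<subseteq> inversions n \<pi> \<and> forced_noninversions \<I> A \<inter> inversions n \<pi> = {}"
proof -
  have "inv \<pi> x < inv \<pi> y \<longleftrightarrow> precedes (inversions n \<pi>) x y"
    if "(x, y) \<in> orientation_digraph \<I> A" for x y
    using inv_less_iff_precedes[OF \<pi>] orientation_digraph_subset[OF IH A] that by blast
  then show ?thesis
    unfolding Or_perm_eq_iff_digraph[OF assms] precedes_on_digraph_iff[symmetric] by auto
qed

lemma sigma_of_eqI:
  assumes "\<sigma> \<in> fiber n \<I> A" "\<And>\<pi>. \<pi> \<in> fiber n \<I> A \<Longrightarrow> weak_le n \<sigma> \<pi>"
  shows "sigma_of n \<I> A = \<sigma>"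
  unfolding sigma_of_def
proof (rule the_equality)
  fix \<sigma>' assume "\<sigma>' \<in> fiber n \<I> A \<and> (\<forall>\<pi>\<in>fiber n \<I> A. weak_le n \<sigma>' \<pi>)"
  then show "\<sigma>' = \<sigma>" using assms weak_le_antisym unfolding fiber_def by blast
qed (use assms in blast)

lemma tau_of_eqI:
  assumes "\<tau> \<in> fiber n \<I> A" "\<And>\<pi>. \<pi> \<in> fiber n \<I> A \<Longrightarrow> weak_le n \<pi> \<tau>"
  shows "tau_of n \<I> A = \<tau>"
  unfolding tau_of_def
proof (rule the_equality)
  fix \<tau>' assume "\<tau>' \<in> fiber n \<I> A \<and> (\<forall>\<pi>\<in>fiber n \<I> A. weak_le n \<pi> \<tau>')"
  then show "\<tau>' = \<tau>" using assms weak_le_antisym unfolding fiber_def by blast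
qed (use assms in blast)

lemma sigma_of_fiber:
  assumes IH: "interval_hypergraph n \<I>" and A: "acyclic_orientation \<I> A"
  shows "sigma_of n \<I> A \<in> fiber n \<I> A"
    and "inversions n (sigma_of n \<I> A) = (forced_inversions \<I> A)\<^sup>+"
proof -
  let ?F = "forced_inversions \<I> A" and ?N = "forced_noninversions \<I> A"
  have ori: "orientation \<I> A" using A unfolding acyclic_orientation_def by blast
  obtain \<sigma> where \<sigma>: "\<sigma> \<in> perms n" "inversions n \<sigma> = ?F\<^sup>+"
    by (rule inversion_set_imp_inversions[OF inversion_set_forced(1)[OF IH ori]])
  have "?F \<subseteq> ?F\<^sup>+" "?N \<inter> ?F\<^sup>+ = {}" using trancl_forced_disjoint[OF A] by auto
  then have "Or_perm n \<I> \<sigma> = A" unfolding Or_perm_eq_iff_forced[OF IH ori \<sigma>(1)] \<sigma>(2) by blast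
  then have fib: "\<sigma> \<in> fiber n \<I> A" unfolding fiber_def using \<sigma>(1) by blast
  have "weak_le n \<sigma> \<pi>" if "\<pi> \<in> fiber n \<I> A" for \<pi>
  proof -
    have \<pi>: "\<pi> \<in> perms n" "Or_perm n \<I> \<pi> = A" using that unfolding fiber_def by auto
    then have "?F \<subseteq> inversions n \<pi>" using Or_perm_eq_iff_forced[OF IH ori \<pi>(1)] by blast
    then show ?thesis
      unfolding weak_le_def \<sigma>(2) by (intro trancl_subset_trans trans_inversions)
  qed
  with fib have "sigma_of n \<I> A = \<sigma>" by (rule sigma_of_eqI)
  with fib \<sigma>(2) show "sigma_of n \<I> A \<in> fiber n \<I> A" "inversions n (sigma_of n \<I> A) = ?F\<^sup>+"
    by simp_all
qed

lemma tau_of_fiber: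
  assumes IH: "interval_hypergraph n \<I>" and A: "acyclic_orientation \<I> A"
  shows "tau_of n \<I> A \<in> fiber n \<I> A"
    and "inversions n (tau_of n \<I> A) = pairs n - (forced_noninversions \<I> A)\<^sup>+"
proof -
  let ?F = "forced_inversions \<I> A" and ?N = "forced_noninversions \<I> A"
  have ori: "orientation \<I> A" using A unfolding acyclic_orientation_def by blast
  obtain \<tau> where \<tau>: "\<tau> \<in> perms n" "inversions n \<tau> = pairs n - ?N\<^sup>+"
    by (rule inversion_set_imp_inversions[OF inversion_set_compl[OF inversion_set_forced(2)[OF IH ori]]])
  have "?F \<subseteq> pairs n - ?N\<^sup>+" "?N \<inter> (pairs n - ?N\<^sup>+) = {}"
    using trancl_forced_disjoint[OF A] forced_subset_pairs(1)[OF IH ori] by auto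
  then have "Or_perm n \<I> \<tau> = A" unfolding Or_perm_eq_iff_forced[OF IH ori \<tau>(1)] \<tau>(2) by blast
  then have fib: "\<tau> \<in> fiber n \<I> A" unfolding fiber_def using \<tau>(1) by blast
  have "weak_le n \<pi> \<tau>" if "\<pi> \<in> fiber n \<I> A" for \<pi>
  proof -
    have \<pi>: "\<pi> \<in> perms n" "Or_perm n \<I> \<pi> = A" using that unfolding fiber_def by auto
    then have "?N \<inter> inversions n \<pi> = {}" using Or_perm_eq_iff_forced[OF IH ori \<pi>(1)] by blast
    then have "?N \<subseteq> pairs n - inversions n \<pi>" using forced_subset_pairs(2)[OF IH ori] by blast
    then have "?N\<^sup>+ \<subseteq> pairs n - inversions n \<pi>"
      by (intro trancl_subset_trans trans_noninversions)
    then show ?thesis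
      unfolding weak_le_def \<tau>(2) using inversions_subset_pairs[of n \<pi>] by blast
  qed
  with fib have "tau_of n \<I> A = \<tau>" by (rule tau_of_eqI)
  with fib \<tau>(2) show "tau_of n \<I> A \<in> fiber n \<I> A"
    "inversions n (tau_of n \<I> A) = pairs n - ?N\<^sup>+"
    by simp_all
qed

lemma Or_perm_sigma_of:
  "interval_hypergraph n \<I> \<Longrightarrow> acyclic_orientation \<I> A \<Longrightarrow>
    sigma_of n \<I> A \<in> perms n \<and> Or_perm n \<I> (sigma_of n \<I> A) = A"
  using sigma_of_fiber(1) unfolding fiber_def by blast

lemma Or_perm_tau_of:
  "interval_hypergraph n \<I> \<Longrightarrow> acyclic_orientation \<I> A \<Longrightarrow>
    tau_of n \<I> A \<in> perms n \<and> Or_perm n \<I> (tau_of n \<I> A) = A"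
  using tau_of_fiber(1) unfolding fiber_def by blast

text \<open>Closure under intersection enters only here: the edge H on which A forces the inversion
  (a, b) and the edge G on which W forces the last arc (c, b) of a chain of forced
  non-inversions from a to b meet in the edge G \<inter> H, where A takes the value b and W the
  smaller value c.\<close>
lemma forced_inversions_Int_trancl_forced_noninversions:
  assumes IH: "interval_hypergraph n \<I>" and CI: "closed_under_intersection \<I>"
    and A: "acyclic_orientation \<I> A" and W: "acyclic_orientation \<I> W"
    and le: "\<forall>H\<in>\<I>. A H \<le> W H"
  shows "forced_inversions \<I> A \<inter> (forced_noninversions \<I> W)\<^sup>+ = {}"
proof (rule ccontr)
  let ?N = "forced_noninversions \<I> W"
  assume "forced_inversions \<I> A \<inter> ?N\<^sup>+ \<noteq> {}"
  then obtain a b where ab: "(a, b) \<in> forced_inversions \<I> A" "(a, b) \<in> ?N\<^sup>+" by auto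
  obtain H where H: "H \<in> \<I>" "b = A H" "a \<in> H" "a < b"
    using ab(1) unfolding forced_inversions_def by (auto elim: orientation_digraphE)
  have bH: "b \<in> H" using A H unfolding acyclic_orientation_def orientation_def by blast
  obtain c where c: "(a, c) \<in> ?N\<^sup>*" "(c, b) \<in> ?N" using ab(2) by (meson tranclD2)
  have "?N\<^sup>+ \<subseteq> {(x, y). x < y}"
    by (rule trancl_subset_trans[OF _ trans_less]) (auto simp: forced_noninversions_def)
  then have "a \<le> c" using c(1) by (auto simp: rtrancl_eq_or_trancl)
  obtain G where G: "G \<in> \<I>" "c = W G" "b \<in> G" "c < b"
    using c(2) unfolding forced_noninversions_def by (auto elim: orientation_digraphE)
  have "c \<in> H" using interval_hypergraph_edgeD(4)[OF IH H(1,3) bH] \<open>a \<le> c\<close> G(4) by simp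
  have "c \<in> G" using W G(1,2) unfolding acyclic_orientation_def orientation_def by blast
  have K: "G \<inter> H \<in> \<I>" using CI G(1,3) H(1) bH unfolding closed_under_intersection_def by blast
  have "W (G \<inter> H) = c"
    using acyclic_orientation_restrict[OF W K G(1)] G(2) \<open>c \<in> G\<close> \<open>c \<in> H\<close> by auto
  moreover have "A (G \<inter> H) = b"
    using acyclic_orientation_restrict[OF A K H(1)] H(2) G(3) bH by auto
  ultimately show False using le K G(4) by fastforce
qed

lemma sigma_of_weak_le_tau_of:
  assumes IH: "interval_hypergraph n \<I>" and CI: "closed_under_intersection \<I>"
    and A: "acyclic_orientation \<I> A" and W: "acyclic_orientation \<I> W"
    and le: "\<forall>H\<in>\<I>. A H \<le> W H"
  shows "weak_le n (sigma_of n \<I> A) (tau_of n \<I> W)"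
proof -
  let ?N = "forced_noninversions \<I> W"
  have oriA: "orientation \<I> A" and oriW: "orientation \<I> W"
    using A W unfolding acyclic_orientation_def by blast+
  have "forced_inversions \<I> A \<subseteq> pairs n - ?N\<^sup>+"
    using forced_inversions_Int_trancl_forced_noninversions[OF assms]
      forced_subset_pairs(1)[OF IH oriA] by blast
  moreover have "trans (pairs n - ?N\<^sup>+)"
    using inversion_set_compl[OF inversion_set_forced(2)[OF IH oriW]]
    unfolding inversion_set_def by blast
  ultimately have "(forced_inversions \<I> A)\<^sup>+ \<subseteq> pairs n - ?N\<^sup>+" by (rule trancl_subset_trans)
  then show ?thesis
    unfolding weak_le_def sigma_of_fiber(2)[OF IH A] tau_of_fiber(2)[OF IH W] .
qed

lemma P_le_imp_le:
  assumes "P_le n \<I> A B"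
  shows "A H \<le> B H"
  using assms unfolding P_le_def
proof (induction rule: rtranclp_induct)
  case (step Q Q')
  have "Q H \<le> Q' H"
  proof (cases "H \<in> \<I>")
    case True
    then show ?thesis using step(2) unfolding increasing_flip_def by (metis less_imp_le order_refl)
  next
    case False
    then show ?thesis using step(2) unfolding acyclic_orientation_def orientation_def by simp
  qed
  then show ?case using step(3) by simp
qed simp

lemma P_le_antisym:
  assumes "P_le n \<I> A B" "P_le n \<I> B A"
  shows "A = B"
  using P_le_imp_le[OF assms(1)] P_le_imp_le[OF assms(2)] by (intro ext antisym)

section \<open>Monotonicity of Or\<close>

lemma transpose_Suc_less_iff:
  "{u, v} \<noteq> {k, Suc k} \<Longrightarrow> transpose k (Suc k) u < transpose k (Suc k) v \<longleftrightarrow> u < v"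
  unfolding transpose_def by auto

lemma swap_perms:
  assumes \<pi>: "\<pi> \<in> perms n" and k: "1 \<le> k" "k < n"
  shows "\<pi> \<circ> transpose k (Suc k) \<in> perms n"
    and "inv (\<pi> \<circ> transpose k (Suc k)) = transpose k (Suc k) \<circ> inv \<pi>"
proof -
  have p: "\<pi> permutes {1..n}" using \<pi> by (rule perms_permutes)
  have "transpose k (Suc k) permutes {1..n}" using k by (intro permutes_swap_id) auto
  then show "\<pi> \<circ> transpose k (Suc k) \<in> perms n"
    using permutes_compose p unfolding perms_def by blast
  show "inv (\<pi> \<circ> transpose k (Suc k)) = transpose k (Suc k) \<circ> inv \<pi>"
    using o_inv_distrib[OF permutes_bij[OF p] bij_transpose] by simp
qed

lemma inversions_swap:
  assumes \<pi>: "\<pi> \<in> perms n" and k: "1 \<le> k" "k < n" and asc: "\<pi> k < \<pi> (Suc k)"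
  shows "inversions n (\<pi> \<circ> transpose k (Suc k)) = insert (\<pi> k, \<pi> (Suc k)) (inversions n \<pi>)"
proof -
  let ?t = "transpose k (Suc k)" and ?p = "inv \<pi>" and ?a = "\<pi> k" and ?b = "\<pi> (Suc k)"
  have p: "\<pi> permutes {1..n}" using \<pi> by (rule perms_permutes)
  have pa: "?p ?a = k" and pb: "?p ?b = Suc k" using permutes_inverses(2)[OF p] by auto
  have ab: "?a \<in> {1..n}" "?b \<in> {1..n}" using perms_in_range(1)[OF \<pi>] k by auto
  have swapped: "?t (?p y) < ?t (?p x) \<longleftrightarrow> ?p y < ?p x" if "x < y" "(x, y) \<noteq> (?a, ?b)" for x y
  proof (rule transpose_Suc_less_iff)
    show "{?p y, ?p x} \<noteq> {k, Suc k}"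
      using that asc perms_inv_inject[OF \<pi>] pa pb by (metis doubleton_eq_iff less_asym)
  qed
  have "(?a, ?b) \<in> inversions n (\<pi> \<circ> ?t)"
    unfolding inversions_def swap_perms(2)[OF assms(1-3)] using pa pb ab asc by simp
  moreover have "q \<in> inversions n (\<pi> \<circ> ?t) \<longleftrightarrow> q \<in> inversions n \<pi>" if "q \<noteq> (?a, ?b)" for q
    using that swapped unfolding inversions_def swap_perms(2)[OF assms(1-3)] by (cases q) auto
  ultimately show ?thesis by (intro set_eqI) (metis insert_iff)
qed

lemma Or_perm_swap:
  assumes IH: "interval_hypergraph n \<I>" and \<pi>: "\<pi> \<in> perms n" and k: "1 \<le> k" "k < n"
    and H: "H \<in> \<I>"
  shows "Or_perm n \<I> (\<pi> \<circ> transpose k (Suc k)) H =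
    (if \<pi> k \<in> H \<and> \<pi> (Suc k) \<in> H \<and> Or_perm n \<I> \<pi> H = \<pi> k then \<pi> (Suc k) else Or_perm n \<I> \<pi> H)"
proof -
  let ?t = "transpose k (Suc k)" and ?p = "inv \<pi>" and ?x = "Or_perm n \<I> \<pi> H"
  have p: "\<pi> permutes {1..n}" using \<pi> by (rule perms_permutes)
  have pa: "?p (\<pi> k) = k" and pb: "?p (\<pi> (Suc k)) = Suc k" using permutes_inverses(2)[OF p] by auto
  have first: "?x \<in> H" "y \<in> H \<Longrightarrow> ?p ?x \<le> ?p y" for y using Or_perm_first[OF IH H \<pi>] by auto
  have swap_eq_iff: "Or_perm n \<I> (\<pi> \<circ> ?t) H = z \<longleftrightarrow> z \<in> H \<and> (\<forall>y\<in>H. ?t (?p z) \<le> ?t (?p y))" for z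
    using Or_perm_eq_iff[OF IH H swap_perms(1)[OF \<pi> k]] unfolding swap_perms(2)[OF \<pi> k] by simp
  show ?thesis
  proof (cases "\<pi> k \<in> H \<and> \<pi> (Suc k) \<in> H \<and> ?x = \<pi> k")
    case True
    have "k \<le> ?t (?p y)" if "y \<in> H" for y
      using first(2)[OF that] True pa unfolding transpose_def by auto
    then have "Or_perm n \<I> (\<pi> \<circ> ?t) H = \<pi> (Suc k)"
      using True pb unfolding swap_eq_iff by simp
    then show ?thesis using True by simp
  next
    case False
    have "?t (?p ?x) \<le> ?t (?p y)" if y: "y \<in> H" for y
    proof -
      have "(?p ?x, ?p y) \<noteq> (k, Suc k)"
      proof
        assume "(?p ?x, ?p y) = (k, Suc k)"
        then have "?x = \<pi> k" "y = \<pi> (Suc k)" using permutes_inverses(1)[OF p] by (metis prod.inject)+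
        then show False using False first(1) y by simp
      qed
      with first(2)[OF y] show ?thesis unfolding transpose_def by auto
    qed
    then have "Or_perm n \<I> (\<pi> \<circ> ?t) H = ?x" using first(1) unfolding swap_eq_iff by simp
    then show ?thesis unfolding if_not_P[OF False] .
  qed
qed

lemma P_le_Or_perm_swap:
  assumes IH: "interval_hypergraph n \<I>" and \<pi>: "\<pi> \<in> perms n" and k: "1 \<le> k" "k < n"
    and asc: "\<pi> k < \<pi> (Suc k)"
  shows "P_le n \<I> (Or_perm n \<I> \<pi>) (Or_perm n \<I> (\<pi> \<circ> transpose k (Suc k)))"
proof (cases "Or_perm n \<I> \<pi> = Or_perm n \<I> (\<pi> \<circ> transpose k (Suc k))")
  case False
  let ?O = "Or_perm n \<I> \<pi>" and ?O' = "Or_perm n \<I> (\<pi> \<circ> transpose k (Suc k))"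
  have "?O H \<noteq> \<pi> (Suc k)" if "H \<in> \<I>" "\<pi> k \<in> H" for H
  proof
    assume "?O H = \<pi> (Suc k)"
    then have "inv \<pi> (\<pi> (Suc k)) \<le> inv \<pi> (\<pi> k)" using Or_perm_first(2)[OF IH that(1) \<pi> that(2)] by simp
    then show False using permutes_inverses(2)[OF perms_permutes[OF \<pi>]] by simp
  qed
  then have "\<forall>H\<in>\<I>. (?O H \<noteq> ?O' H \<longrightarrow> ?O H = \<pi> k \<and> ?O' H = \<pi> (Suc k)) \<and>
      ({\<pi> k, \<pi> (Suc k)} \<subseteq> H \<longrightarrow> (?O H = \<pi> k) = (?O' H = \<pi> (Suc k)))"
    using Or_perm_swap[OF IH \<pi> k] by auto
  moreover have "1 \<le> \<pi> k" "\<pi> (Suc k) \<le> n" using perms_in_range(1)[OF \<pi>] k by auto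
  ultimately have "increasing_flip n \<I> ?O ?O'"
    unfolding increasing_flip_def using False asc by blast
  then show ?thesis
    unfolding P_le_def using acyclic_orientation_Or_perm[OF IH] \<pi> swap_perms(1)[OF \<pi> k]
    by (simp add: r_into_rtranclp)
qed (simp add: P_le_def)

lemma inversions_subset_if_adjacent_ordered:
  assumes \<pi>: "\<pi> \<in> perms n"
    and adj: "\<And>i. 1 \<le> i \<Longrightarrow> i < n \<Longrightarrow> inv \<rho> (\<pi> i) < inv \<rho> (\<pi> (Suc i))"
  shows "inversions n \<rho> \<subseteq> inversions n \<pi>"
proof (rule subrelI)
  have p: "\<pi> permutes {1..n}" using \<pi> by (rule perms_permutes)
  have mono: "inv \<rho> (\<pi> i) < inv \<rho> (\<pi> (Suc i + m))" if "1 \<le> i" "Suc i + m \<le> n" for i m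
    using that
  proof (induction m)
    case (Suc m)
    then have "inv \<rho> (\<pi> i) < inv \<rho> (\<pi> (Suc i + m))" by simp
    also have "\<dots> < inv \<rho> (\<pi> (Suc i + Suc m))" using adj[of "Suc i + m"] Suc.prems by simp
    finally show ?case .
  qed (use adj in simp)
  fix x y assume "(x, y) \<in> inversions n \<rho>"
  then have xy: "1 \<le> x" "x < y" "y \<le> n" "inv \<rho> y < inv \<rho> x" unfolding inversions_def by auto
  let ?i = "inv \<pi> x" and ?j = "inv \<pi> y"
  have ij: "?i \<in> {1..n}" "?j \<in> {1..n}" using perms_in_range(2)[OF \<pi>] xy by auto
  have "?i \<noteq> ?j" using xy perms_inv_inject[OF \<pi>] by blast
  moreover have "\<not> ?i < ?j"
  proof
    assume "?i < ?j"
    then obtain m where m: "?j = Suc ?i + m" using less_iff_Suc_add by auto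
    have "inv \<rho> (\<pi> ?i) < inv \<rho> (\<pi> ?j)" unfolding m using mono[of ?i m] ij m by simp
    then have "inv \<rho> x < inv \<rho> y" using permutes_inverses(1)[OF p] by simp
    then show False using xy by simp
  qed
  ultimately have "?j < ?i" by simp
  then show "(x, y) \<in> inversions n \<pi>" using xy unfolding inversions_def by auto
qed

lemma ascent_in_inversions_exists:
  assumes \<pi>: "\<pi> \<in> perms n" and \<rho>: "\<rho> \<in> perms n" and lt: "inversions n \<pi> \<subset> inversions n \<rho>"
  shows "\<exists>k. 1 \<le> k \<and> k < n \<and> \<pi> k < \<pi> (Suc k) \<and> (\<pi> k, \<pi> (Suc k)) \<in> inversions n \<rho>"
proof (rule ccontr)
  assume none: "\<not> ?thesis"
  have p: "\<pi> permutes {1..n}" using \<pi> by (rule perms_permutes)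
  have "inv \<rho> (\<pi> i) < inv \<rho> (\<pi> (Suc i))" if i: "1 \<le> i" "i < n" for i
  proof -
    let ?u = "\<pi> i" and ?v = "\<pi> (Suc i)"
    have uv: "?u \<in> {1..n}" "?v \<in> {1..n}" using perms_in_range(1)[OF \<pi>] i by auto
    have "?u \<noteq> ?v" using permutes_inj[OF p] by (metis injD n_not_Suc_n)
    then consider "?u < ?v" | "?v < ?u" by linarith
    then show ?thesis
    proof cases
      case 1
      then have "(?u, ?v) \<notin> inversions n \<rho>" using none i by blast
      then show ?thesis using 1 uv inv_less_iff_precedes[OF \<rho>] unfolding precedes_def by blast
    next
      case 2
      have "inv \<pi> ?u < inv \<pi> ?v" using permutes_inverses(2)[OF p] by simp
      then have "(?v, ?u) \<in> inversions n \<pi>" using 2 uv unfolding inversions_def by auto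
      then have "(?v, ?u) \<in> inversions n \<rho>" using lt by blast
      then show ?thesis unfolding inversions_def by auto
    qed
  qed
  then have "inversions n \<rho> \<subseteq> inversions n \<pi>"
    by (rule inversions_subset_if_adjacent_ordered[OF \<pi>])
  then show False using lt by blast
qed

lemma P_le_Or_perm_mono:
  assumes IH: "interval_hypergraph n \<I>" and \<pi>: "\<pi> \<in> perms n" and \<rho>: "\<rho> \<in> perms n"
    and le: "weak_le n \<pi> \<rho>"
  shows "P_le n \<I> (Or_perm n \<I> \<pi>) (Or_perm n \<I> \<rho>)"
proof -
  have fin: "finite (inversions n \<rho> - inversions n \<pi>')" for \<pi>'
    by (rule finite_Diff[OF finite_subset[OF inversions_subset_pairs finite_pairs]])
  have "P_le n \<I> (Or_perm n \<I> \<pi>) (Or_perm n \<I> \<rho>)"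
    if "\<pi> \<in> perms n" "weak_le n \<pi> \<rho>" "card (inversions n \<rho> - inversions n \<pi>) = d" for \<pi> d
    using that
  proof (induction d arbitrary: \<pi>)
    case 0
    then have "inversions n \<pi> = inversions n \<rho>"
      using fin[of \<pi>] unfolding weak_le_def by (simp add: Diff_eq_empty_iff subset_antisym)
    then show ?case using inversions_inject[OF 0(1) \<rho>] unfolding P_le_def by simp
  next
    case (Suc d \<pi>)
    then have "inversions n \<pi> \<subset> inversions n \<rho>" unfolding weak_le_def by fastforce
    then obtain k where k: "1 \<le> k" "k < n" "\<pi> k < \<pi> (Suc k)" "(\<pi> k, \<pi> (Suc k)) \<in> inversions n \<rho>"
      using ascent_in_inversions_exists[OF Suc.prems(1) \<rho>] by blast
    let ?\<pi>' = "\<pi> \<circ> transpose k (Suc k)"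
    note swap = inversions_swap[OF Suc.prems(1) k(1-3)]
    have "(\<pi> k, \<pi> (Suc k)) \<notin> inversions n \<pi>"
      using permutes_inverses(2)[OF perms_permutes[OF Suc.prems(1)]] unfolding inversions_def by simp
    then have "inversions n \<rho> - inversions n ?\<pi>' = (inversions n \<rho> - inversions n \<pi>) - {(\<pi> k, \<pi> (Suc k))}"
      and "(\<pi> k, \<pi> (Suc k)) \<in> inversions n \<rho> - inversions n \<pi>"
      using k(4) unfolding swap by auto
    then have "card (inversions n \<rho> - inversions n ?\<pi>') = d"
      using Suc.prems(3) fin[of \<pi>] by simp
    moreover have "weak_le n ?\<pi>' \<rho>" using Suc.prems(2) k(4) unfolding weak_le_def swap by simp
    ultimately have "P_le n \<I> (Or_perm n \<I> ?\<pi>') (Or_perm n \<I> \<rho>)"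
      using Suc.IH swap_perms(1)[OF Suc.prems(1) k(1,2)] by blast
    then show ?case
      using P_le_Or_perm_swap[OF IH Suc.prems(1) k(1-3)] unfolding P_le_def by simp
  qed
  then show ?thesis using \<pi> le by blast
qed

section \<open>Joins and meets\<close>

lemma is_lub_Or_perm:
  assumes IH: "interval_hypergraph n \<I>" and CI: "closed_under_intersection \<I>"
    and A: "acyclic_orientation \<I> A" and B: "acyclic_orientation \<I> B"
    and lub: "is_lub_on (perms n) (weak_le n) \<pi> (sigma_of n \<I> A) (sigma_of n \<I> B)"
  shows "is_lub_on {Q. acyclic_orientation \<I> Q} (P_le n \<I>) (Or_perm n \<I> \<pi>) A B"
  unfolding is_lub_on_def
proof (intro conjI ballI impI)
  have \<pi>: "\<pi> \<in> perms n" using lub unfolding is_lub_on_def by blast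
  then show "Or_perm n \<I> \<pi> \<in> {Q. acyclic_orientation \<I> Q}"
    using acyclic_orientation_Or_perm[OF IH] by blast
  show "P_le n \<I> A (Or_perm n \<I> \<pi>)" "P_le n \<I> B (Or_perm n \<I> \<pi>)"
    using P_le_Or_perm_mono[OF IH _ \<pi>] Or_perm_sigma_of[OF IH] A B lub
    unfolding is_lub_on_def by metis+
  fix W assume W: "W \<in> {Q. acyclic_orientation \<I> Q}" and "P_le n \<I> A W \<and> P_le n \<I> B W"
  then have "weak_le n (sigma_of n \<I> A) (tau_of n \<I> W)" "weak_le n (sigma_of n \<I> B) (tau_of n \<I> W)"
    using sigma_of_weak_le_tau_of[OF IH CI] P_le_imp_le A B by blast+
  then have "weak_le n \<pi> (tau_of n \<I> W)"
    using lub Or_perm_tau_of[OF IH] W unfolding is_lub_on_def by blast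
  then show "P_le n \<I> (Or_perm n \<I> \<pi>) W"
    using P_le_Or_perm_mono[OF IH \<pi>] Or_perm_tau_of[OF IH] W by fastforce
qed

lemma is_glb_Or_perm:
  assumes IH: "interval_hypergraph n \<I>" and CI: "closed_under_intersection \<I>"
    and A: "acyclic_orientation \<I> A" and B: "acyclic_orientation \<I> B"
    and glb: "is_glb_on (perms n) (weak_le n) \<pi> (tau_of n \<I> A) (tau_of n \<I> B)"
  shows "is_glb_on {Q. acyclic_orientation \<I> Q} (P_le n \<I>) (Or_perm n \<I> \<pi>) A B"
  unfolding is_glb_on_def
proof (intro conjI ballI impI)
  have \<pi>: "\<pi> \<in> perms n" using glb unfolding is_glb_on_def by blast
  then show "Or_perm n \<I> \<pi> \<in> {Q. acyclic_orientation \<I> Q}"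
    using acyclic_orientation_Or_perm[OF IH] by blast
  show "P_le n \<I> (Or_perm n \<I> \<pi>) A" "P_le n \<I> (Or_perm n \<I> \<pi>) B"
    using P_le_Or_perm_mono[OF IH \<pi>] Or_perm_tau_of[OF IH] A B glb
    unfolding is_glb_on_def by metis+
  fix W assume W: "W \<in> {Q. acyclic_orientation \<I> Q}" and "P_le n \<I> W A \<and> P_le n \<I> W B"
  then have "weak_le n (sigma_of n \<I> W) (tau_of n \<I> A)" "weak_le n (sigma_of n \<I> W) (tau_of n \<I> B)"
    using sigma_of_weak_le_tau_of[OF IH CI] P_le_imp_le A B by blast+
  then have "weak_le n (sigma_of n \<I> W) \<pi>"
    using glb Or_perm_sigma_of[OF IH] W unfolding is_glb_on_def by blast
  then show "P_le n \<I> W (Or_perm n \<I> \<pi>)"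
    using P_le_Or_perm_mono[OF IH _ \<pi>] Or_perm_sigma_of[OF IH] W by fastforce
qed

theorem proposition4p11:
  fixes n :: nat and \<I> :: "nat set set"
  assumes "interval_hypergraph n \<I>" and "closed_under_intersection \<I>"
  defines "AO \<equiv> {Q. acyclic_orientation \<I> Q}"
  shows "(\<forall>A\<in>AO. \<forall>B\<in>AO. P_le n \<I> A B \<and> P_le n \<I> B A \<longrightarrow> A = B) \<and>
    (\<forall>A\<in>AO. \<forall>B\<in>AO.
       (\<exists>\<pi>. is_lub_on (perms n) (weak_le n) \<pi> (sigma_of n \<I> A) (sigma_of n \<I> B) \<and>
             is_lub_on AO (P_le n \<I>) (Or_perm n \<I> \<pi>) A B) \<and>
       (\<exists>\<pi>. is_glb_on (perms n) (weak_le n) \<pi> (tau_of n \<I> A) (tau_of n \<I> B) \<and>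
             is_glb_on AO (P_le n \<I>) (Or_perm n \<I> \<pi>) A B))"
proof (intro conjI ballI impI)
  fix A B assume "A \<in> AO" "B \<in> AO" "P_le n \<I> A B \<and> P_le n \<I> B A"
  then show "A = B" using P_le_antisym by blast
next
  fix A B assume "A \<in> AO" "B \<in> AO"
  then have A: "acyclic_orientation \<I> A" and B: "acyclic_orientation \<I> B" unfolding AO_def by auto
  obtain \<pi> where "is_lub_on (perms n) (weak_le n) \<pi> (sigma_of n \<I> A) (sigma_of n \<I> B)"
    using weak_le_lub_exists Or_perm_sigma_of[OF assms(1)] A B by blast
  with is_lub_Or_perm[OF assms(1,2) A B] show
    "\<exists>\<pi>. is_lub_on (perms n) (weak_le n) \<pi> (sigma_of n \<I> A) (sigma_of n \<I> B) \<and>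
         is_lub_on AO (P_le n \<I>) (Or_perm n \<I> \<pi>) A B"
    unfolding AO_def by blast
  obtain \<pi> where "is_glb_on (perms n) (weak_le n) \<pi> (tau_of n \<I> A) (tau_of n \<I> B)"
    using weak_le_glb_exists Or_perm_tau_of[OF assms(1)] A B by blast
  with is_glb_Or_perm[OF assms(1,2) A B] show
    "\<exists>\<pi>. is_glb_on (perms n) (weak_le n) \<pi> (tau_of n \<I> A) (tau_of n \<I> B) \<and>
         is_glb_on AO (P_le n \<I>) (Or_perm n \<I> \<pi>) A B"
    unfolding AO_def by blast
qed

end
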